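(* Let $\varepsilon\in(0,1)$ and let $G_0$ be the symmetric game with payoff matrix $$U_0= \begin{pmatrix} 0 & -1 & \varepsilon & 0 \\ \varepsilon & 0 & -1 & 0 \\ -1 & \varepsilon & 0 & 0 \\ \frac{-1+\varepsilon}{3} & \frac{-1+\varepsilon}{3} & \frac{-1+\varepsilon}{3} & 0 \end{pmatrix}.$$ Let $n=(1/3,1/3,1/3,0)$, $E_0=\{\lambda n+(1-\lambda)e_4:\lambda\in[0,1]\}$, and $$V_0(x)=\frac12\sum_{i=1}^4\big[\max(0,(U_0x)_i-x\cdot U_0x)\big]^2 .$$ Then there exists an open neighborhood $N_{eq}$ of $E_0$ in $S_4$ such that, for every solution $x(\cdot)$ of the Brown-von Neumann-Nash dynamics in $G_0$, the function $v_0(t)=V_0(x(t))$ satisfies $\dot v_0(t)>0$ whenever $x(t)\in N_{eq}\setminus E_0$.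
   Context: The Brown-von Neumann-Nash (BNN) dynamics for payoff matrix $U$ on $S_4$ is $\dot x_i=k_i(x)-x_i\sum_j k_j(x)$ with $k_i(x)=\max(0,(Ux)_i-x\cdot Ux)$. $e_4$ is the fourth vertex of $S_4$. *)

theory Defs
  imports "HOL-Analysis.Analysis"
begin

text \<open>Vectors in R^4 are modelled as real^4; index 1..4 of the paper corresponds to
  the elements 1,2,3,4 of the numeral type 4.\<close>

definition simplex4 :: "(real^4) set" where
  "simplex4 = {x. (\<forall>i. 0 \<le> x $ i) \<and> (\<Sum>i\<in>UNIV. x $ i) = 1}"

definition e4 :: "real^4" where
  "e4 = axis 4 1"

definition nvec :: "real^4" where
  "nvec = vector [1/3, 1/3, 1/3, 0]"

definition E0 :: "(real^4) set" where
  "E0 = {l *\<^sub>R nvec + (1 - l) *\<^sub>R e4 | l. l \<in> {0..1}}"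

definition U0 :: "real \<Rightarrow> real^4^4" where
  "U0 eps = vector [
     vector [0, -1, eps, 0],
     vector [eps, 0, -1, 0],
     vector [-1, eps, 0, 0],
     vector [(-1 + eps)/3, (-1 + eps)/3, (-1 + eps)/3, 0]]"

definition bnn_k :: "real^4^4 \<Rightarrow> real^4 \<Rightarrow> 4 \<Rightarrow> real" where
  "bnn_k U x i = max 0 ((U *v x) $ i - x \<bullet> (U *v x))"

definition bnn_field :: "real^4^4 \<Rightarrow> real^4 \<Rightarrow> real^4" where
  "bnn_field U x = (\<chi> i. bnn_k U x i - x $ i * (\<Sum>j\<in>UNIV. bnn_k U x j))"

definition V0 :: "real \<Rightarrow> real^4 \<Rightarrow> real" where
  "V0 eps x = 1/2 * (\<Sum>i\<in>UNIV. (bnn_k (U0 eps) x i)^2)"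

end

theory Submission
  imports Defs
begin

text \<open>Along any BNN solution the potential \<open>V = \<bar>k\<bar>\<^sup>2/2\<close> of the excess payoffs \<open>k\<close>, with total
  \<open>K = \<Sum>k\<^sub>i\<close>, changes at the rate \<open>k\<bullet>Uk - 2K\<bar>k\<bar>\<^sup>2 - K x\<bullet>Uk\<close>, for every payoff matrix \<open>U\<close>.
  For \<open>U\<^sub>0\<close> the fourth strategy never has positive excess on the simplex, and the payoff gaps of
  the first three strategies sum to three times that of the fourth, so one of \<open>k\<^sub>1, k\<^sub>2, k\<^sub>3\<close>
  vanishes. In coordinates the rate is \<open>(1-\<epsilon>)/6 \<Sum>(k\<^sub>i - k\<^sub>j)\<^sup>2\<close> plus terms bounded by
  a multiple of \<open>\<delta> (max k\<^sub>i)\<^sup>2\<close>, where \<open>\<delta>\<close> bounds the distance of \<open>x\<close> from the diagonal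
  \<open>x\<^sub>1 = x\<^sub>2 = x\<^sub>3\<close> (which also bounds every \<open>k\<^sub>i\<close>). Since some \<open>k\<^sub>i\<close> vanishes,
  \<open>\<Sum>(k\<^sub>i - k\<^sub>j)\<^sup>2 \<ge> (max k\<^sub>i)\<^sup>2\<close>, so the rate is positive for \<open>\<delta> \<le> (1-\<epsilon>)/200\<close> unless
  \<open>k = 0\<close>; and near the diagonal the Nash equilibria (\<open>k = 0\<close>) are exactly the points of \<open>E\<^sub>0\<close>.\<close>

definition payoff_gap :: "real^'n^'n \<Rightarrow> real^'n \<Rightarrow> 'n \<Rightarrow> real" where
  "payoff_gap U y i = (U *v y) $ i - y \<bullet> (U *v y)"

lemma bnn_k_eq_max_payoff_gap: "bnn_k U y i = max 0 (payoff_gap U y i)"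
  by (simp add: bnn_k_def payoff_gap_def)

lemma payoff_gap_weighted_sum:
  fixes U :: "real^'n^'n"
  assumes "(\<Sum>i\<in>UNIV. y $ i) = 1"
  shows "(\<Sum>i\<in>UNIV. y $ i * payoff_gap U y i) = 0"
  using assms
  by (simp add: payoff_gap_def right_diff_distrib sum_subtractf inner_vec_def
      flip: sum_distrib_right)

lemma has_real_derivative_payoff_gap:
  fixes U :: "real^'n^'n" and x :: "real \<Rightarrow> real^'n"
  assumes "(x has_vector_derivative F) (at t within I)"
  shows "((\<lambda>s. payoff_gap U (x s) i) has_real_derivative
           (U *v F) $ i - (F \<bullet> (U *v x t) + x t \<bullet> (U *v F))) (at t within I)"
proof -
  have dx: "(x has_derivative (\<lambda>h. h *\<^sub>R F)) (at t within I)"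
    using assms by (simp add: has_vector_derivative_def)
  note dUx = bounded_linear.has_derivative[OF matrix_vector_mul_bounded_linear dx, of U]
  have "((\<lambda>s. payoff_gap U (x s) i) has_derivative
      (\<lambda>h. (U *v (h *\<^sub>R F)) $ i - (x t \<bullet> (U *v (h *\<^sub>R F)) + (h *\<^sub>R F) \<bullet> (U *v x t)))) (at t within I)"
    unfolding payoff_gap_def by (intro has_derivative_diff has_derivative_inner dx dUx
        bounded_linear.has_derivative[OF bounded_linear_vec_nth dUx])
  then show ?thesis
    by (rule has_derivative_imp_has_field_derivative)
       (simp add: matrix_vector_mult_scaleR algebra_simps inner_commute)
qed

lemma has_real_derivative_pos_part_sq:
  "((\<lambda>u::real. (max 0 u)\<^sup>2) has_real_derivative 2 * max 0 u) (at u)"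
proof -
  consider "u > 0" | "u < 0" | "u = 0" by linarith
  then show ?thesis
  proof cases
    case 1
    have "((\<lambda>u::real. u\<^sup>2) has_real_derivative 2 * max 0 u) (at u)"
      using 1 by (auto intro!: derivative_eq_intros)
    then show ?thesis
      by (rule has_field_derivative_transform_within_open[where S="{0<..}"]) (use 1 in auto)
  next
    case 2
    have "((\<lambda>u::real. 0) has_real_derivative 2 * max 0 u) (at u)"
      using 2 by (auto intro!: derivative_eq_intros)
    then show ?thesis
      by (rule has_field_derivative_transform_within_open[where S="{..<0}"]) (use 2 in auto)
  next
    case 3
    have "((\<lambda>y::real. (max 0 y)\<^sup>2 / y) \<longlongrightarrow> 0) (at 0)"
    proof (rule Lim_null_comparison)
      show "\<forall>\<^sub>F y in at 0. norm ((max 0 y)\<^sup>2 / y) \<le> \<bar>y\<bar>"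
        by (intro always_eventually allI) (auto simp: max_def power2_eq_square abs_mult divide_simps)
      show "((\<lambda>y::real. \<bar>y\<bar>) \<longlongrightarrow> 0) (at 0)"
        using tendsto_rabs_zero[OF tendsto_ident_at[of 0 UNIV]] by simp
    qed
    then show ?thesis using 3 by (simp add: has_field_derivative_iff)
  qed
qed

definition bnn_potential_rate :: "real^4^4 \<Rightarrow> real^4 \<Rightarrow> real" where
  "bnn_potential_rate U y =
     (let k = \<chi> i. bnn_k U y i; K = \<Sum>j\<in>UNIV. bnn_k U y j
      in k \<bullet> (U *v k) - 2 * K * (k \<bullet> k) - K * (y \<bullet> (U *v k)))"

lemma bnn_excess_inner_self:
  fixes U :: "real^4^4" and y :: "real^4"
  defines "k \<equiv> \<chi> i. bnn_k U y i"
  shows "k \<bullet> k = k \<bullet> (U *v y) - (\<Sum>j\<in>UNIV. bnn_k U y j) * (y \<bullet> (U *v y))"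
proof -
  have "k $ i * k $ i = k $ i * ((U *v y) $ i - y \<bullet> (U *v y))" for i
    by (simp add: k_def bnn_k_def max_def)
  then show ?thesis
    by (simp add: inner_vec_def k_def sum_distrib_right right_diff_distrib sum_subtractf)
qed

lemma bnn_potential_derivative:
  fixes U :: "real^4^4" and x :: "real \<Rightarrow> real^4"
  assumes dx: "(x has_vector_derivative bnn_field U (x t)) (at t within I)"
  shows "((\<lambda>s. 1/2 * (\<Sum>i\<in>UNIV. (bnn_k U (x s) i)\<^sup>2)) has_real_derivative
           bnn_potential_rate U (x t)) (at t within I)"
proof -
  define k where "k = (\<chi> i. bnn_k U (x t) i)"
  define K where "K = (\<Sum>j\<in>UNIV. bnn_k U (x t) j)"
  define y where "y = x t"
  define F where "F = bnn_field U y"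
  define c where "c = F \<bullet> (U *v y) + y \<bullet> (U *v F)"
  have F: "F = k - K *\<^sub>R y"
    by (simp add: F_def bnn_field_def k_def K_def y_def vec_eq_iff)
  have "((\<lambda>s. (bnn_k U (x s) i)\<^sup>2) has_real_derivative 2 * k $ i * ((U *v F) $ i - c))
          (at t within I)" for i
    using DERIV_chain2[OF has_real_derivative_pos_part_sq
        has_real_derivative_payoff_gap[OF dx, of U i]]
    by (simp add: bnn_k_eq_max_payoff_gap k_def c_def F_def y_def)
  then have "((\<lambda>s. 1/2 * (\<Sum>i\<in>UNIV. (bnn_k U (x s) i)\<^sup>2)) has_real_derivative
           1/2 * (\<Sum>i\<in>UNIV. 2 * k $ i * ((U *v F) $ i - c))) (at t within I)"
    by (intro DERIV_cmult DERIV_sum)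
  moreover have "1/2 * (\<Sum>i\<in>UNIV. 2 * k $ i * ((U *v F) $ i - c)) = k \<bullet> (U *v F) - K * c"
    by (simp add: inner_vec_def K_def k_def right_diff_distrib sum_subtractf sum_distrib_right
        sum_distrib_left mult.assoc)
  moreover have "k \<bullet> (U *v F) - K * c = k \<bullet> (U *v k) - 2 * K * (k \<bullet> k) - K * (y \<bullet> (U *v k))"
  proof -
    have "k \<bullet> (U *v y) = k \<bullet> k + K * (y \<bullet> (U *v y))"
      using bnn_excess_inner_self[of U y] by (simp add: k_def K_def y_def)
    then show ?thesis
      by (simp add: F c_def matrix_vector_mult_diff_distrib matrix_vector_mult_scaleR
          inner_diff_left inner_diff_right algebra_simps)
  qed
  moreover have "bnn_potential_rate U y = k \<bullet> (U *v k) - 2 * K * (k \<bullet> k) - K * (y \<bullet> (U *v k))"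
    by (simp add: bnn_potential_rate_def k_def K_def y_def Let_def)
  ultimately show ?thesis by (simp only: y_def)
qed

lemma abs_cyclic_form_le:
  fixes e r M k1 k2 k3 z1 z2 z3 :: real
  assumes "0 \<le> e" "e \<le> 1"
    and "0 \<le> k1" "0 \<le> k2" "0 \<le> k3" "k1 \<le> M" "k2 \<le> M" "k3 \<le> M"
    and "\<bar>z1\<bar> \<le> r" "\<bar>z2\<bar> \<le> r" "\<bar>z3\<bar> \<le> r"
  shows "\<bar>z1 * (e * k3 - k2) + z2 * (e * k1 - k3) + z3 * (e * k2 - k1)\<bar> \<le> 3 * r * M"
proof -
  have ek: "0 \<le> e * k \<and> e * k \<le> M" if "0 \<le> k" "k \<le> M" for k
    using that assms(1,2) mult_left_le_one_le[of k e] by simp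
  have w: "\<bar>e * k3 - k2\<bar> \<le> M" "\<bar>e * k1 - k3\<bar> \<le> M" "\<bar>e * k2 - k1\<bar> \<le> M"
    using assms(3-8) ek[of k1] ek[of k2] ek[of k3] by (simp_all add: abs_le_iff)
  have zw: "\<bar>z * w\<bar> \<le> r * M" if "\<bar>z\<bar> \<le> r" "\<bar>w\<bar> \<le> M" for z w :: real
    unfolding abs_mult using that by (intro mult_mono) auto
  show ?thesis
    using zw[OF assms(9) w(1)] zw[OF assms(10) w(2)] zw[OF assms(11) w(3)] by linarith
qed

lemma excess_rate_pos:
  fixes e \<delta> k1 k2 k3 z1 z2 z3 :: real
  assumes "0 < e" "e < 1" "200 * \<delta> \<le> 1 - e"
    and "0 \<le> k1" "0 \<le> k2" "0 \<le> k3" "k1 \<le> \<delta>" "k2 \<le> \<delta>" "k3 \<le> \<delta>"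
    and "k1 = 0 \<or> k2 = 0 \<or> k3 = 0" "0 < k1 + k2 + k3"
    and "\<bar>z1\<bar> \<le> \<delta>" "\<bar>z2\<bar> \<le> \<delta>" "\<bar>z3\<bar> \<le> \<delta>"
  shows "0 < (1 - e) / 6 * ((k1 - k2)\<^sup>2 + (k2 - k3)\<^sup>2 + (k3 - k1)\<^sup>2)
    - (k1 + k2 + k3) * (z1 * (e * k3 - k2) + z2 * (e * k1 - k3) + z3 * (e * k2 - k1))
    - 2 * (k1 + k2 + k3) * (k1\<^sup>2 + k2\<^sup>2 + k3\<^sup>2)"
proof -
  define M where "M = max k1 (max k2 k3)"
  define S where "S = k1 + k2 + k3"
  have M: "k1 \<le> M" "k2 \<le> M" "k3 \<le> M" "M \<le> \<delta>" "0 < M" "0 \<le> S" "S \<le> 3 * M"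
    using assms unfolding M_def S_def by auto
  have "k\<^sup>2 \<le> (k1 - k2)\<^sup>2 + (k2 - k3)\<^sup>2 + (k3 - k1)\<^sup>2" if "k \<in> {k1, k2, k3}" for k
    using assms(10) that by (auto simp: power2_commute)
  moreover have "M \<in> {k1, k2, k3}"
    unfolding M_def by (auto simp: max_def)
  ultimately have "(1 - e) / 6 * M\<^sup>2 \<le> (1 - e) / 6 * ((k1 - k2)\<^sup>2 + (k2 - k3)\<^sup>2 + (k3 - k1)\<^sup>2)"
    using assms(2) by simp
  moreover have "S * (z1 * (e * k3 - k2) + z2 * (e * k1 - k3) + z3 * (e * k2 - k1)) \<le> 9 * \<delta> * M\<^sup>2"
  proof -
    have "z1 * (e * k3 - k2) + z2 * (e * k1 - k3) + z3 * (e * k2 - k1) \<le> 3 * \<delta> * M"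
      using abs_cyclic_form_le[of e k1 k2 k3 M z1 \<delta> z2 z3] assms M by linarith
    then have "S * (z1 * (e * k3 - k2) + z2 * (e * k1 - k3) + z3 * (e * k2 - k1)) \<le> S * (3 * \<delta> * M)"
      using M(6) by (rule mult_left_mono)
    also have "\<dots> \<le> (3 * M) * (3 * \<delta> * M)"
      using M by (intro mult_right_mono) auto
    finally show ?thesis
      by (simp add: power2_eq_square mult_ac)
  qed
  moreover have "2 * S * (k1\<^sup>2 + k2\<^sup>2 + k3\<^sup>2) \<le> 18 * \<delta> * M\<^sup>2"
  proof -
    have sq: "k\<^sup>2 \<le> \<delta> * M" if "0 \<le> k" "k \<le> M" for k
      using that M(4) unfolding power2_eq_square by (meson mult_mono order_trans)
    have "k1\<^sup>2 + k2\<^sup>2 + k3\<^sup>2 \<le> 3 * (\<delta> * M)"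
      using sq[OF assms(4) M(1)] sq[OF assms(5) M(2)] sq[OF assms(6) M(3)] by linarith
    then have "2 * S * (k1\<^sup>2 + k2\<^sup>2 + k3\<^sup>2) \<le> 2 * (3 * M) * (3 * (\<delta> * M))"
      using M by (intro mult_mono) auto
    then show ?thesis
      by (simp add: power2_eq_square mult_ac)
  qed
  moreover have "27 * \<delta> * M\<^sup>2 < (1 - e) / 6 * M\<^sup>2"
    using assms(3) M(4,5) by (intro mult_strict_right_mono) auto
  ultimately show ?thesis
    unfolding S_def by linarith
qed

lemma vector_4 [simp]:
  "(vector [a, b, c, d] :: 'a::zero^4) $ 1 = a" "(vector [a, b, c, d] :: 'a^4) $ 2 = b"
  "(vector [a, b, c, d] :: 'a^4) $ 3 = c" "(vector [a, b, c, d] :: 'a^4) $ 4 = d"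
  unfolding vector_def by simp_all

lemma U0_mult_vec:
  "(U0 e *v y) $ 1 = e * y $ 3 - y $ 2"
  "(U0 e *v y) $ 2 = e * y $ 1 - y $ 3"
  "(U0 e *v y) $ 3 = e * y $ 2 - y $ 1"
  "(U0 e *v y) $ 4 = (e - 1) / 3 * (y $ 1 + y $ 2 + y $ 3)"
  by (simp_all add: U0_def matrix_vector_mult_def sum_4 algebra_simps)

lemma U0_payoff_gap_sum:
  "payoff_gap (U0 e) y 1 + payoff_gap (U0 e) y 2 + payoff_gap (U0 e) y 3 = 3 * payoff_gap (U0 e) y 4"
  by (simp add: payoff_gap_def U0_mult_vec field_simps)

lemma U0_payoff_gap_4:
  assumes "y \<in> simplex4"
  shows "payoff_gap (U0 e) y 4 = - (1 - e) / 6 * ((y$1 - y$2)\<^sup>2 + (y$2 - y$3)\<^sup>2 + (y$3 - y$1)\<^sup>2)"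
proof -
  have y4: "y $ 4 = 1 - y $ 1 - y $ 2 - y $ 3"
    using assms by (simp add: simplex4_def sum_4)
  show ?thesis
    unfolding payoff_gap_def inner_vec_def sum_4 U0_mult_vec y4
    by (simp add: field_simps power2_eq_square)
qed

lemma U0_payoff_gap_le:
  assumes "0 \<le> e" "e \<le> 1" and "\<bar>y$1 - y$2\<bar> \<le> \<delta>" "\<bar>y$2 - y$3\<bar> \<le> \<delta>" "\<bar>y$3 - y$1\<bar> \<le> \<delta>"
  shows "payoff_gap (U0 e) y i \<le> payoff_gap (U0 e) y 4 + \<delta>"
proof -
  have diff: "payoff_gap (U0 e) y 1 - payoff_gap (U0 e) y 4 = ((1-e)*(y$1-y$2)+(1+2*e)*(y$3-y$2))/3"
    "payoff_gap (U0 e) y 2 - payoff_gap (U0 e) y 4 = ((1+2*e)*(y$1-y$3)+(1-e)*(y$2-y$3))/3"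
    "payoff_gap (U0 e) y 3 - payoff_gap (U0 e) y 4 = ((1+2*e)*(y$2-y$1)+(1-e)*(y$3-y$1))/3"
    by (simp_all add: payoff_gap_def U0_mult_vec field_simps)
  have comb: "(1 - e) * u + (1 + 2 * e) * v \<le> 3 * \<delta>" if "\<bar>u\<bar> \<le> \<delta>" "\<bar>v\<bar> \<le> \<delta>" for u v
  proof -
    have "(1 - e) * u \<le> (1 - e) * \<delta>" "(1 + 2 * e) * v \<le> (1 + 2 * e) * \<delta>"
      using that assms(1,2) by (auto intro!: mult_left_mono)
    moreover have "e * \<delta> \<le> \<delta>"
      using that assms(1,2) by (simp add: mult_left_le_one_le)
    ultimately show ?thesis by (simp add: algebra_simps)
  qed
  have "\<bar>y$2 - y$1\<bar> \<le> \<delta>" "\<bar>y$3 - y$2\<bar> \<le> \<delta>" "\<bar>y$1 - y$3\<bar> \<le> \<delta>"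
    using assms(3-5) by (simp_all add: abs_minus_commute)
  then have "\<forall>j. payoff_gap (U0 e) y j \<le> payoff_gap (U0 e) y 4 + \<delta>"
    unfolding forall_4
    using diff comb[of "y$1 - y$2" "y$3 - y$2"] comb[of "y$2 - y$3" "y$1 - y$3"]
      comb[of "y$3 - y$1" "y$2 - y$1"] assms(3-5)
    by (auto simp: algebra_simps)
  then show ?thesis ..
qed

lemma E0_eq: "E0 = {y \<in> simplex4. y$1 = y$2 \<and> y$2 = y$3}"
proof (intro set_eqI iffI)
  fix y assume "y \<in> E0"
  then obtain l where "0 \<le> l" "l \<le> 1" "y = l *\<^sub>R nvec + (1 - l) *\<^sub>R e4"
    by (auto simp: E0_def)
  then show "y \<in> {y \<in> simplex4. y$1 = y$2 \<and> y$2 = y$3}"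
    by (simp add: simplex4_def nvec_def e4_def axis_def forall_4 sum_4)
next
  fix y assume y: "y \<in> {y \<in> simplex4. y$1 = y$2 \<and> y$2 = y$3}"
  then have "y = (3 * y$1) *\<^sub>R nvec + (1 - 3 * y$1) *\<^sub>R e4" "0 \<le> 3 * y$1" "3 * y$1 \<le> 1"
    by (auto simp: simplex4_def vec_eq_iff forall_4 sum_4 nvec_def e4_def axis_def)
  then show "y \<in> E0"
    unfolding E0_def by force
qed

lemma U0_nash_near_diagonal_in_E0:
  assumes "e < 1" "y \<in> simplex4"
    and "\<bar>y$1 - y$2\<bar> < 1/3" "\<bar>y$2 - y$3\<bar> < 1/3" "\<bar>y$3 - y$1\<bar> < 1/3"
    and nash: "\<forall>i. payoff_gap (U0 e) y i \<le> 0"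
  shows "y \<in> E0"
proof -
  have y: "0 \<le> y$1" "0 \<le> y$2" "0 \<le> y$3" "0 \<le> y$4" "y$1 + y$2 + y$3 + y$4 = 1"
    using assms(2) by (auto simp: simplex4_def sum_4)
  have terms: "y$i * payoff_gap (U0 e) y i \<le> 0" for i
    using assms(2) nash by (simp add: simplex4_def mult_nonneg_nonpos)
  have "(\<Sum>i\<in>UNIV. y$i * payoff_gap (U0 e) y i) = 0"
    using assms(2) by (simp add: simplex4_def payoff_gap_weighted_sum)
  then have zero: "y$i * payoff_gap (U0 e) y i = 0" for i
    using sum_nonneg_eq_0_iff[of UNIV "\<lambda>i. - (y$i * payoff_gap (U0 e) y i)"] terms
    by (simp add: sum_negf)
  have "payoff_gap (U0 e) y 4 = 0"
  proof (cases "y$4 = 0")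
    case True
    then have "0 < y$1" "0 < y$2" "0 < y$3"
      using y assms(3-5) by linarith+
    then show ?thesis
      using zero[of 1] zero[of 2] zero[of 3] U0_payoff_gap_sum[of e y] by simp
  next
    case False
    then show ?thesis using zero[of 4] by simp
  qed
  then have "(y$1 - y$2)\<^sup>2 + (y$2 - y$3)\<^sup>2 + (y$3 - y$1)\<^sup>2 = 0"
    using U0_payoff_gap_4[OF assms(2), of e] assms(1) by simp
  then have "y$1 = y$2 \<and> y$2 = y$3"
    by (smt (verit) power2_less_eq_zero_iff zero_le_power2)
  then show ?thesis
    using assms(2) by (simp add: E0_eq)
qed

lemma U0_rate_eq:
  fixes k y :: "real^4"
  assumes "k$4 = 0" "y$1 + y$2 + y$3 + y$4 = 1"
  defines "S \<equiv> k$1 + k$2 + k$3" and "m \<equiv> (y$1 + y$2 + y$3) / 3"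
  shows "k \<bullet> (U0 e *v k) - 2 * S * (k \<bullet> k) - S * (y \<bullet> (U0 e *v k))
    = (1 - e) / 6 * ((k$1 - k$2)\<^sup>2 + (k$2 - k$3)\<^sup>2 + (k$3 - k$1)\<^sup>2)
      - S * ((y$1 - m) * (e * k$3 - k$2) + (y$2 - m) * (e * k$1 - k$3) + (y$3 - m) * (e * k$2 - k$1))
      - 2 * S * ((k$1)\<^sup>2 + (k$2)\<^sup>2 + (k$3)\<^sup>2)"
proof -
  have y4: "y$4 = 1 - y$1 - y$2 - y$3"
    using assms(2) by simp
  show ?thesis
    unfolding inner_vec_def sum_4 U0_mult_vec y4 assms(1) S_def m_def
    by (simp add: field_simps power2_eq_square)
qed

lemma U0_bnn_potential_rate_pos:
  assumes "0 < e" "e < 1" "200 * \<delta> \<le> 1 - e" "y \<in> simplex4 - E0"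
    and near: "\<bar>y$1 - y$2\<bar> < \<delta>" "\<bar>y$2 - y$3\<bar> < \<delta>" "\<bar>y$3 - y$1\<bar> < \<delta>"
  shows "0 < bnn_potential_rate (U0 e) y"
proof -
  define k where "k = (\<chi> i. bnn_k (U0 e) y i)"
  define K where "K = (\<Sum>j\<in>UNIV. bnn_k (U0 e) y j)"
  have y: "y \<in> simplex4" "y \<notin> E0"
    using assms(4) by auto
  have k: "k$i = max 0 (payoff_gap (U0 e) y i)" for i
    by (simp add: k_def bnn_k_eq_max_payoff_gap)
  have "- (1 - e) / 6 * ((y$1 - y$2)\<^sup>2 + (y$2 - y$3)\<^sup>2 + (y$3 - y$1)\<^sup>2) \<le> 0"
    using assms(2) by (intro mult_nonpos_nonneg) auto
  then have gap4: "payoff_gap (U0 e) y 4 \<le> 0"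
    by (simp only: U0_payoff_gap_4[OF y(1)])
  then have k4: "k$4 = 0"
    by (simp add: k)
  have k_le: "k$i \<le> \<delta>" for i
    using U0_payoff_gap_le[of e y \<delta> i] gap4 assms(1,2) near by (simp add: k)
  have k_zero: "k$1 = 0 \<or> k$2 = 0 \<or> k$3 = 0"
    using U0_payoff_gap_sum[of e y] gap4 by (auto simp: k)
  have k_pos: "0 < k$1 + k$2 + k$3"
  proof (rule ccontr)
    assume "\<not> 0 < k$1 + k$2 + k$3"
    then have "\<forall>i. payoff_gap (U0 e) y i \<le> 0"
      using k[of 1] k[of 2] k[of 3] gap4 by (auto simp: forall_4)
    moreover have "\<bar>y$1 - y$2\<bar> < 1/3" "\<bar>y$2 - y$3\<bar> < 1/3" "\<bar>y$3 - y$1\<bar> < 1/3"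
      using near assms(1,3) by linarith+
    ultimately have "y \<in> E0"
      using U0_nash_near_diagonal_in_E0[OF assms(2) y(1)] by blast
    with y(2) show False ..
  qed
  have "\<bar>y$i - (y$1 + y$2 + y$3) / 3\<bar> \<le> \<delta>" if "i \<in> {1, 2, 3}" for i
    using that near by (auto simp: abs_le_iff abs_less_iff field_simps)
  moreover have "y$1 + y$2 + y$3 + y$4 = 1"
    using y(1) by (simp add: simplex4_def sum_4)
  moreover have "K = k$1 + k$2 + k$3"
    using k4 by (simp add: K_def k_def sum_4)
  moreover have "bnn_potential_rate (U0 e) y = k \<bullet> (U0 e *v k) - 2 * K * (k \<bullet> k) - K * (y \<bullet> (U0 e *v k))"
    by (simp add: bnn_potential_rate_def k_def K_def Let_def)
  ultimately show ?thesis
    using U0_rate_eq[OF k4, of y e]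
      excess_rate_pos[OF assms(1-3) _ _ _ k_le[of 1] k_le[of 2] k_le[of 3] k_zero k_pos]
    by (simp add: k)
qed

theorem lemma3:
  fixes eps :: real
  assumes "0 < eps" and "eps < 1"
  shows "\<exists>N. openin (top_of_set simplex4) N \<and> E0 \<subseteq> N \<and>
    (\<forall>(I::real set) (x::real \<Rightarrow> real^4).
       is_interval I \<longrightarrow>
       (\<forall>t\<in>I. x t \<in> simplex4 \<and>
          (x has_vector_derivative bnn_field (U0 eps) (x t)) (at t within I)) \<longrightarrow>
       (\<forall>t\<in>I. x t \<in> N - E0 \<longrightarrow>
          (\<exists>d. ((\<lambda>s. V0 eps (x s)) has_real_derivative d) (at t within I) \<and> d > 0)))"
proof -
  define \<delta> where "\<delta> = (1 - eps) / 200"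
  define N where "N = simplex4 \<inter> {y. \<bar>y$1 - y$2\<bar> < \<delta> \<and> \<bar>y$2 - y$3\<bar> < \<delta> \<and> \<bar>y$3 - y$1\<bar> < \<delta>}"
  show ?thesis
  proof (intro exI[of _ N] conjI allI impI ballI)
    show "openin (top_of_set simplex4) N"
      unfolding N_def by (intro openin_open_Int open_Collect_conj open_Collect_less continuous_intros)
    show "E0 \<subseteq> N"
      using assms(2) by (auto simp: E0_eq N_def \<delta>_def)
  next
    fix I and x :: "real \<Rightarrow> real^4" and t
    assume "\<forall>t\<in>I. x t \<in> simplex4 \<and>
      (x has_vector_derivative bnn_field (U0 eps) (x t)) (at t within I)" and "t \<in> I"
    then have "(x has_vector_derivative bnn_field (U0 eps) (x t)) (at t within I)"
      by blast
    note derivative = bnn_potential_derivative[OF this]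
    assume "x t \<in> N - E0"
    then have "0 < bnn_potential_rate (U0 eps) (x t)"
      by (intro U0_bnn_potential_rate_pos[OF assms, of \<delta>]) (auto simp: N_def \<delta>_def)
    with derivative show "\<exists>d. ((\<lambda>s. V0 eps (x s)) has_real_derivative d) (at t within I) \<and> d > 0"
      unfolding V0_def by blast
  qed
qed

end
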